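(* Let $T:\mathrm{PSym}(3)\to\mathrm{Sym}(3)$ satisfy Axioms (A0.1), (A0.2), (A0.3), (A1) and (A3). Then there exists $c\in\mathbb R$ such that for all $\alpha>0$ $$T\big(\mathrm{diag}(\alpha,\alpha^{-1},1)\big)=c\,\log\mathrm{diag}(\alpha,\alpha^{-1},1)=c\,\mathrm{diag}(\ln\alpha,-\ln\alpha,0).$$
   Context: $\mathrm{Sym}(3)$: real symmetric $3\times3$ matrices; $\mathrm{PSym}(3)$: symmetric positive definite ones; $\mathbb 1$: identity; $\mathrm{O}(3)$: orthogonal group; $\log$ is the principal matrix logarithm $\mathrm{PSym}(3)\to\mathrm{Sym}(3)$; coaxial means commuting. Axiom (A0.1): $T$ continuous. Axiom (A0.2): $T(U)=0$ iff $U=\mathbb 1$. Axiom (A0.3): $T(Q^TUQ)=Q^TT(U)Q$ for all $Q\in\mathrm O(3)$. Axiom (A1): for every $\alpha>0$ there is $s\in\mathbb R$ such that for all $U\in\mathrm{PSym}(3)$: $U=\mathrm{diag}(\alpha,\alpha^{-1},1)$ if and only if $T(U)=\mathrm{diag}(s,-s,0)$. Axiom (A3): $T(U_1U_2)=T(U_1)+T(U_2)$ for all coaxial $U_1,U_2\in\mathrm{PSym}(3)$. *)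

theory Defs
  imports "HOL-Analysis.Analysis"
begin

type_synonym mat3 = "real^3^3"

definition Sym3 :: "mat3 set" where
  "Sym3 = {A. transpose A = A}"

definition PSym3 :: "mat3 set" where
  "PSym3 = {A. transpose A = A \<and> (\<forall>x::real^3. x \<noteq> 0 \<longrightarrow> x \<bullet> (A *v x) > 0)}"

definition diag3 :: "real \<Rightarrow> real \<Rightarrow> real \<Rightarrow> mat3" where
  "diag3 a b c = (\<chi> i j. if i = j then (vector [a, b, c] :: real^3) $ i else 0)"

end

theory Submission
  imports Defs
begin

(* Write S(a) = diag(a, 1/a, 1) for the planar stretch with ratio a > 0.
   The stretches are positive definite and commute, with S(a) S(b) = S(ab).  By (A1),
   T(S(a)) = diag(f a, -f a, 0) for the scalar f a = T(S(a))_11, and by (A3) applied to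
   the commuting pair S(a), S(b) the function f satisfies f(ab) = f a + f b on (0,oo).
   By (A0.1) f is continuous, and every continuous solution of this logarithmic Cauchy
   equation is a multiple of ln; hence T(S(a)) = c diag(ln a, -ln a, 0). *)

lemma additive_of_nat_mult:
  fixes g :: "real \<Rightarrow> real"
  assumes add: "\<And>x y. g (x + y) = g x + g y"
  shows "g (real n * x) = real n * g x"
proof (induction n)
  case 0
  have "g 0 = g 0 + g 0" using add[of 0 0] by simp
  then show ?case by simp
next
  case (Suc n)
  have "g (real (Suc n) * x) = g (real n * x + x)" by (simp add: algebra_simps)
  also have "\<dots> = real n * g x + g x" using add Suc by simp
  finally show ?case by (simp add: algebra_simps)
qed

lemma additive_of_int_mult:
  fixes g :: "real \<Rightarrow> real"
  assumes add: "\<And>x y. g (x + y) = g x + g y"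
  shows "g (of_int k * x) = of_int k * g x"
proof -
  have odd_fun: "g (- y) = - g y" for y
    using add[of y "- y"] add[of 0 0] by simp
  show ?thesis
  proof (cases "k \<ge> 0")
    case True
    then have "real (nat k) = of_int k" by simp
    then show ?thesis using additive_of_nat_mult[OF add, of "nat k" x] by simp
  next
    case False
    then have "real (nat (- k)) = - of_int k" by simp
    then show ?thesis
      using additive_of_nat_mult[OF add, of "nat (- k)" x] odd_fun[of "real (nat (- k)) * x"]
      by simp
  qed
qed

text \<open>Hence an additive function is linear on the rationals, and by density of the
  rationals a continuous additive function is linear everywhere.\<close>

lemma continuous_additive_linear:
  fixes g :: "real \<Rightarrow> real"
  assumes add: "\<And>x y. g (x + y) = g x + g y"
    and cont: "continuous_on UNIV g"
  shows "g x = g 1 * x"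
proof -
  have on_rationals: "\<rat> \<subseteq> {x. g x = g 1 * x}"
  proof
    fix q :: real assume "q \<in> \<rat>"
    then obtain m n where q: "q = of_int m / of_int n" and n: "n > 0"
      by (cases rule: Rats_cases') auto
    have "of_int n * g q = g (of_int n * q)" using additive_of_int_mult[OF add, of n q] by simp
    also have "of_int n * q = of_int m * 1" using q n by simp
    also have "g \<dots> = of_int m * g 1" by (rule additive_of_int_mult[OF add])
    finally have "of_int n * g q = of_int m * g 1" .
    with n show "q \<in> {x. g x = g 1 * x}" by (simp add: q field_simps)
  qed
  have "closed {x. g x = g 1 * x}"
    by (intro closed_Collect_eq cont continuous_intros)
  then have "closure \<rat> \<subseteq> {x. g x = g 1 * x}"
    using closure_minimal[OF on_rationals] by blast
  then show ?thesis by (auto simp: Rats_closure_real)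
qed

lemma continuous_log_equation:
  fixes f :: "real \<Rightarrow> real"
  assumes mult: "\<And>a b. a > 0 \<Longrightarrow> b > 0 \<Longrightarrow> f (a * b) = f a + f b"
    and cont: "continuous_on {0<..} f"
  shows "\<exists>c. \<forall>a>0. f a = c * ln a"
proof -
  define g where "g x = f (exp x)" for x
  have add: "g (x + y) = g x + g y" for x y by (simp add: g_def exp_add mult)
  have "continuous_on UNIV g"
    unfolding g_def
    by (rule continuous_on_compose2[OF cont continuous_on_exp[OF continuous_on_id]]) auto
  then have "g x = g 1 * x" for x by (rule continuous_additive_linear[OF add])
  then have "f a = g 1 * ln a" if "a > 0" for a
    using that by (metis exp_ln g_def)
  then show ?thesis by blast
qed

lemma diag3_nth:
  "diag3 a b c $ i $ j = (if i = j then (if i = 1 then a else if i = 2 then b else c) else 0)"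
  unfolding diag3_def using exhaust_3[of i] by (auto simp: vector_3)

lemma diag3_mult: "diag3 a b c ** diag3 a' b' c' = diag3 (a * a') (b * b') (c * c')"
  by (simp add: vec_eq_iff matrix_matrix_mult_def sum_3 diag3_nth forall_3)

lemma diag3_scaleR: "k *\<^sub>R diag3 a b c = diag3 (k * a) (k * b) (k * c)"
  by (simp add: vec_eq_iff diag3_nth forall_3)

text \<open>The quadratic form of diag(a,b,c) is a x1^2 + b x2^2 + c x3^2, so the matrix is
  positive definite when its diagonal entries are positive.\<close>

lemma diag3_PSym3:
  assumes "a > 0" "b > 0" "c > 0"
  shows "diag3 a b c \<in> PSym3"
proof -
  have "transpose (diag3 a b c) = diag3 a b c"
    by (simp add: vec_eq_iff diag3_nth forall_3 transpose_def)
  moreover have "x \<bullet> (diag3 a b c *v x) > 0" if "x \<noteq> 0" for x :: "real^3"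
  proof -
    have form: "x \<bullet> (diag3 a b c *v x) = a * (x$1)^2 + b * (x$2)^2 + c * (x$3)^2"
      by (simp add: inner_vec_def matrix_vector_mult_def sum_3 diag3_nth power2_eq_square)
    have "x$1 \<noteq> 0 \<or> x$2 \<noteq> 0 \<or> x$3 \<noteq> 0" using that by (auto simp: vec_eq_iff forall_3)
    then have "a * (x$1)^2 > 0 \<or> b * (x$2)^2 > 0 \<or> c * (x$3)^2 > 0" using assms by auto
    moreover have "a * (x$1)^2 \<ge> 0" "b * (x$2)^2 \<ge> 0" "c * (x$3)^2 \<ge> 0" using assms by auto
    ultimately show ?thesis unfolding form by linarith
  qed
  ultimately show ?thesis by (auto simp: PSym3_def)
qed

lemma continuous_on_diag3:
  assumes "continuous_on S a" "continuous_on S b" "continuous_on S c"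
  shows "continuous_on S (\<lambda>x. diag3 (a x) (b x) (c x))"
proof -
  have "diag3 (a x) (b x) (c x) =
      a x *\<^sub>R diag3 1 0 0 + b x *\<^sub>R diag3 0 1 0 + c x *\<^sub>R diag3 0 0 1" for x
    by (simp add: vec_eq_iff diag3_nth forall_3)
  then show ?thesis using assms by (simp only:) (intro continuous_intros)
qed

definition stretch3 :: "real \<Rightarrow> mat3" where
  "stretch3 a = diag3 a (1 / a) 1"

lemma stretch3_PSym3: "a > 0 \<Longrightarrow> stretch3 a \<in> PSym3"
  unfolding stretch3_def by (simp add: diag3_PSym3)

lemma stretch3_mult: "stretch3 (a * b) = stretch3 a ** stretch3 b"
  by (simp add: stretch3_def diag3_mult)

lemma stretch3_commute: "stretch3 a ** stretch3 b = stretch3 b ** stretch3 a"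
  by (metis stretch3_mult mult.commute)

lemma continuous_on_stretch3: "continuous_on {0<..} stretch3"
  unfolding stretch3_def by (intro continuous_on_diag3 continuous_intros) auto

lemma stretch_response_shape:
  assumes A1: "\<forall>\<alpha>>0. \<exists>s::real. \<forall>U\<in>PSym3.
                U = diag3 \<alpha> (1/\<alpha>) 1 \<longleftrightarrow> T U = diag3 s (-s) 0"
    and "a > 0"
  shows "T (stretch3 a) = diag3 (T (stretch3 a) $ 1 $ 1) (- T (stretch3 a) $ 1 $ 1) 0"
proof -
  obtain s where "T (stretch3 a) = diag3 s (-s) 0"
    using A1 \<open>a > 0\<close> stretch3_PSym3[OF \<open>a > 0\<close>] unfolding stretch3_def by blast
  then show ?thesis by (simp add: diag3_nth)
qed

lemma stretch_response_additive:
  assumes A3: "\<forall>U1\<in>PSym3. \<forall>U2\<in>PSym3. U1 ** U2 = U2 ** U1 \<longrightarrow>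
                T (U1 ** U2) = T U1 + T U2"
    and "a > 0" "b > 0"
  shows "T (stretch3 (a * b)) = T (stretch3 a) + T (stretch3 b)"
  unfolding stretch3_mult
  using A3 stretch3_PSym3[OF assms(2)] stretch3_PSym3[OF assms(3)] stretch3_commute by blast

theorem mainTheorem5:
  fixes T :: "mat3 \<Rightarrow> mat3"
  assumes maps: "\<forall>U\<in>PSym3. T U \<in> Sym3"
    and A01: "continuous_on PSym3 T"
    and A02: "\<forall>U\<in>PSym3. T U = 0 \<longleftrightarrow> U = mat 1"
    and A03: "\<forall>Q U. orthogonal_matrix Q \<and> U \<in> PSym3 \<longrightarrow>
                T (transpose Q ** U ** Q) = transpose Q ** T U ** Q"
    and A1: "\<forall>\<alpha>>0. \<exists>s::real. \<forall>U\<in>PSym3.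
                U = diag3 \<alpha> (1/\<alpha>) 1 \<longleftrightarrow> T U = diag3 s (-s) 0"
    and A3: "\<forall>U1\<in>PSym3. \<forall>U2\<in>PSym3. U1 ** U2 = U2 ** U1 \<longrightarrow>
                T (U1 ** U2) = T U1 + T U2"
  shows "\<exists>c::real. \<forall>\<alpha>>0. T (diag3 \<alpha> (1/\<alpha>) 1) = c *\<^sub>R diag3 (ln \<alpha>) (- ln \<alpha>) 0"
proof -
  define f where "f a = T (stretch3 a) $ 1 $ 1" for a
  have "f (a * b) = f a + f b" if "a > 0" "b > 0" for a b
    using stretch_response_additive[OF A3 that] by (simp add: f_def)
  moreover have "continuous_on {0<..} f"
  proof -
    have "continuous_on {0<..} (T \<circ> stretch3)"
      by (rule continuous_on_compose[OF continuous_on_stretch3 continuous_on_subset[OF A01]])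
        (auto intro: stretch3_PSym3)
    then show ?thesis unfolding f_def o_def by (intro continuous_intros)
  qed
  ultimately obtain c where f_log: "\<forall>a>0. f a = c * ln a"
    using continuous_log_equation by blast
  have "T (diag3 a (1/a) 1) = c *\<^sub>R diag3 (ln a) (- ln a) 0" if "a > 0" for a
  proof -
    have "T (diag3 a (1/a) 1) = diag3 (f a) (- f a) 0"
      using stretch_response_shape[OF A1 that] unfolding f_def stretch3_def .
    then show ?thesis using f_log that by (simp add: diag3_scaleR)
  qed
  then show ?thesis by blast
qed

end
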